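(* Let $G$ be a finite connected multigraph without loops with $n$ vertices and $m$ edges, and $q\in V(G)$. Then $\dim S/\mathcal C_G^q=2m-n+1$, and the multiplicities satisfy $e(S/\mathcal C_G^q)=e(R/\mathcal C_G)=\kappa(G)$, the number of spanning trees of $G$.
   Context: $\mathbb E(G)$ is the set of oriented edges ($2m$ of them, head $e_+$, tail $e_-$), $\mathbb E(A,B)=\{e:e_+\in A,e_-\in B\}$; a connected cut is $\mathbb E(A,A^c)$ with $\emptyset\ne A\subsetneq V(G)$ and $G[A],G[A^c]$ connected. $S=k[y_e:e\in\mathbb E(G)]$, $R=k[x_e:e\in E(G)]$, standard $\mathbb Z$-grading. $\mathcal C_G^q$ is generated by $\prod_{e\in\mathbb E(A,A^c)}y_e$ over connected cuts with $q\in A^c$; $\mathcal C_G$ by the corresponding products of $x_{|e|}$ ($|e|$ the underlying edge). The multiplicity $e(M)$ of a graded module $M$ is the leading coefficient (normalized in the usual way, i.e. degree) of its Hilbert polynomial. *)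

theory Defs
  imports "HOL-Library.Poly_Mapping" "HOL-Computational_Algebra.Polynomial"
begin

type_synonym ('x, 'k) mpoly = "('x \<Rightarrow>\<^sub>0 nat) \<Rightarrow>\<^sub>0 'k"

definition var :: "'x \<Rightarrow> ('x, 'k::comm_semiring_1) mpoly" where
  "var x = Poly_Mapping.single (Poly_Mapping.single x 1) 1"

definition mdeg :: "('x \<Rightarrow>\<^sub>0 nat) \<Rightarrow> nat" where
  "mdeg mn = (\<Sum>x\<in>Poly_Mapping.keys mn. Poly_Mapping.lookup mn x)"

definition scal :: "'k::field \<Rightarrow> ('x, 'k) mpoly \<Rightarrow> ('x, 'k) mpoly" where
  "scal c p = Poly_Mapping.map (\<lambda>a. c * a) p"

definition homog :: "nat \<Rightarrow> ('x, 'k::field) mpoly set" where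
  "homog d = {p. \<forall>mn\<in>Poly_Mapping.keys p. mdeg mn = d}"

definition ideal_gen :: "('x, 'k::field) mpoly set \<Rightarrow> ('x, 'k) mpoly set" where
  "ideal_gen Gs = {\<Sum>g\<in>Gs. c g * g | c. True}"

text \<open>Hilbert function of S/I, I generated by Gs (homogeneous generators):
  dim_k (S/I)_d = dim_k S_d - dim_k I_d\<close>
definition hilb_fun :: "'k::field itself \<Rightarrow> ('x, 'k) mpoly set \<Rightarrow> nat \<Rightarrow> nat" where
  "hilb_fun K Gs d =
     vector_space.dim scal (homog d :: ('x, 'k) mpoly set)
     - vector_space.dim scal (homog d \<inter> ideal_gen Gs)"

definition samuel_poly :: "'k::field itself \<Rightarrow> ('x, 'k) mpoly set \<Rightarrow> real poly" where
  "samuel_poly K Gs =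
     (THE P. eventually (\<lambda>d. real (\<Sum>i\<le>d. hilb_fun K Gs i) = poly P (real d)) sequentially)"

text \<open>Dimension of S/I (degree of the Hilbert--Samuel polynomial, i.e. degree of
  the Hilbert polynomial plus one)\<close>
definition quot_dim :: "'k::field itself \<Rightarrow> ('x, 'k) mpoly set \<Rightarrow> nat" where
  "quot_dim K Gs = degree (samuel_poly K Gs)"

text \<open>Multiplicity e(S/I) = (dim)! times the leading coefficient of the
  Hilbert--Samuel polynomial (= (dim-1)! times leading coeff. of Hilbert polynomial)\<close>
definition multiplicity :: "'k::field itself \<Rightarrow> ('x, 'k) mpoly set \<Rightarrow> real" where
  "multiplicity K Gs = fact (quot_dim K Gs) * lead_coeff (samuel_poly K Gs)"

text \<open>Vertices: all elements of the finite type 'v; edges: all elements of the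
  finite type 'e; edge e has endpoints ends e = (u, v).
  Oriented edges are pairs (e, b); (e, True) has head fst (ends e), tail snd (ends e),
  (e, False) the reverse.\<close>

definition loopless :: "('e \<Rightarrow> 'v \<times> 'v) \<Rightarrow> bool" where
  "loopless ends \<longleftrightarrow> (\<forall>e. fst (ends e) \<noteq> snd (ends e))"

definition ohead :: "('e \<Rightarrow> 'v \<times> 'v) \<Rightarrow> 'e \<times> bool \<Rightarrow> 'v" where
  "ohead ends oe = (if snd oe then fst (ends (fst oe)) else snd (ends (fst oe)))"

definition otail :: "('e \<Rightarrow> 'v \<times> 'v) \<Rightarrow> 'e \<times> bool \<Rightarrow> 'v" where
  "otail ends oe = (if snd oe then snd (ends (fst oe)) else fst (ends (fst oe)))"

definition oedges_between :: "('e \<Rightarrow> 'v \<times> 'v) \<Rightarrow> 'v set \<Rightarrow> 'v set \<Rightarrow> ('e \<times> bool) set" where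
  "oedges_between ends A B = {oe. ohead ends oe \<in> A \<and> otail ends oe \<in> B}"

definition adj_in :: "('e \<Rightarrow> 'v \<times> 'v) \<Rightarrow> 'e set \<Rightarrow> 'v set \<Rightarrow> ('v \<times> 'v) set" where
  "adj_in ends F A = {(u, v). u \<in> A \<and> v \<in> A \<and>
      (\<exists>e\<in>F. ends e = (u, v) \<or> ends e = (v, u))}"

definition connected_on :: "('e \<Rightarrow> 'v \<times> 'v) \<Rightarrow> 'e set \<Rightarrow> 'v set \<Rightarrow> bool" where
  "connected_on ends F A \<longleftrightarrow> A \<noteq> {} \<and> (\<forall>u\<in>A. \<forall>v\<in>A. (u, v) \<in> (adj_in ends F A)\<^sup>*)"

definition graph_connected :: "('e \<Rightarrow> 'v \<times> 'v) \<Rightarrow> bool" where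
  "graph_connected ends \<longleftrightarrow> connected_on ends UNIV UNIV"

definition connected_cut_side :: "('e \<Rightarrow> 'v \<times> 'v) \<Rightarrow> 'v set \<Rightarrow> bool" where
  "connected_cut_side ends A \<longleftrightarrow> A \<noteq> {} \<and> A \<noteq> UNIV \<and>
      connected_on ends UNIV A \<and> connected_on ends UNIV (- A)"

definition cut_gens_oriented :: "('e \<Rightarrow> 'v \<times> 'v) \<Rightarrow> 'v \<Rightarrow> ('e \<times> bool, 'k::field) mpoly set" where
  "cut_gens_oriented ends q =
     {\<Prod>oe\<in>oedges_between ends A (- A). var oe | A. connected_cut_side ends A \<and> q \<in> - A}"

definition cut_gens :: "('e \<Rightarrow> 'v \<times> 'v) \<Rightarrow> 'v \<Rightarrow> ('e, 'k::field) mpoly set" where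
  "cut_gens ends q =
     {\<Prod>oe\<in>oedges_between ends A (- A). var (fst oe) | A. connected_cut_side ends A \<and> q \<in> - A}"

definition spanning_trees :: "('e \<Rightarrow> 'v::finite \<times> 'v) \<Rightarrow> 'e set set" where
  "spanning_trees ends = {T. card T = card (UNIV :: 'v set) - 1 \<and> connected_on ends T UNIV}"

end

theory Submission
  imports Defs
begin

text \<open>Both ideals are squarefree monomial ideals. The Hilbert function of \<open>S/I\<close> counts the
  monomials outside \<open>I\<close>; grouping them by their support, a face \<open>F\<close> of the Stanley--Reisner
  complex, shows that \<open>d \<mapsto> \<Sum>\<^sub>F (d choose card F)\<close> is the Hilbert--Samuel polynomial.
  So \<open>dim S/I\<close> is the maximal size of a face and \<open>e(S/I)\<close> the number of faces of that size.

  A set of oriented edges meets every connected cut \<open>E(A, A\<^sup>c)\<close> with \<open>q \<notin> A\<close> iff every vertex is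
  reachable from \<open>q\<close> along it. Hence the faces of \<open>C\<^sub>G\<^sup>q\<close> are the complements of such sets; the
  minimal ones are the spanning arborescences rooted at \<open>q\<close>, with \<open>n - 1\<close> arcs, so the maximal
  faces have \<open>2m - n + 1\<close> elements. In the same way the maximal faces of \<open>C\<^sub>G\<close> are the
  complements of spanning trees. Forgetting orientations maps the arborescences rooted at \<open>q\<close>
  bijectively onto the spanning trees, because removing a tree edge disconnects the tree.\<close>

section \<open>Monomial ideals\<close>

lemma lookup_scal [simp]: "Poly_Mapping.lookup (scal c p) m = c * Poly_Mapping.lookup p m"
  by (simp add: scal_def map.rep_eq when_def)

interpretation mpoly: vector_space "scal :: 'k::field \<Rightarrow> ('x, 'k) mpoly \<Rightarrow> ('x, 'k) mpoly"
  by unfold_locales (auto intro!: poly_mapping_eqI simp: lookup_add algebra_simps)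

abbreviation monomial :: "('x \<Rightarrow>\<^sub>0 nat) \<Rightarrow> ('x, 'k::zero_neq_one) mpoly" where
  "monomial mn \<equiv> Poly_Mapping.single mn 1"

lemma inj_monomial: "inj (monomial :: ('x \<Rightarrow>\<^sub>0 nat) \<Rightarrow> ('x, 'k::zero_neq_one) mpoly)"
  by (rule injI) (metis lookup_single_eq lookup_single_not_eq zero_neq_one)

lemma lookup_sum_scal_monomial:
  assumes "finite N"
  shows "Poly_Mapping.lookup (\<Sum>m\<in>N. scal (c m) (monomial m)) mn
    = (if mn \<in> N then c mn else (0::'k::field))"
proof -
  have "Poly_Mapping.lookup (\<Sum>m\<in>N. scal (c m) (monomial m)) mn = (\<Sum>m\<in>N. if m = mn then c m else 0)"
    by (simp add: lookup_sum lookup_single when_def if_distrib cong: if_cong)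
  then show ?thesis
    using assms by simp
qed

lemma mpoly_monomial_expansion:
  fixes p :: "('x, 'k::field) mpoly"
  shows "p = (\<Sum>mn\<in>Poly_Mapping.keys p. scal (Poly_Mapping.lookup p mn) (monomial mn))"
  by (rule poly_mapping_eqI) (simp add: lookup_sum_scal_monomial in_keys_iff)

lemma dim_eq_card_monomials:
  fixes N :: "('x \<Rightarrow>\<^sub>0 nat) set" and W :: "('x, 'k::field) mpoly set"
  assumes "finite N"
    and supported: "W \<subseteq> {p. Poly_Mapping.keys p \<subseteq> N}"
    and monomials: "monomial ` N \<subseteq> W"
  shows "mpoly.dim W = card N"
proof (rule mpoly.dim_unique[of "monomial ` N"])
  show "W \<subseteq> mpoly.span (monomial ` N)"
  proof
    fix p assume "p \<in> W"
    then have "Poly_Mapping.keys p \<subseteq> N"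
      using supported by auto
    then have "(\<Sum>mn\<in>Poly_Mapping.keys p. scal (Poly_Mapping.lookup p mn) (monomial mn))
        \<in> mpoly.span (monomial ` N)"
      by (intro mpoly.span_sum mpoly.span_scale mpoly.span_base) auto
    then show "p \<in> mpoly.span (monomial ` N)"
      by (subst mpoly_monomial_expansion)
  qed
  show "mpoly.independent (monomial ` N :: ('x, 'k) mpoly set)"
    unfolding mpoly.independent_explicit_finite_subsets
  proof (intro allI impI ballI)
    fix S c v
    assume S: "S \<subseteq> monomial ` N" "finite S" and zero: "(\<Sum>v\<in>S. scal (c v) v) = 0" and "v \<in> S"
    obtain M where M: "M \<subseteq> N" "S = monomial ` M"
      using S(1) by (auto simp: subset_image_iff)
    with \<open>v \<in> S\<close> obtain mn where mn: "mn \<in> M" "v = monomial mn"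
      by auto
    have "finite M"
      using M(1) \<open>finite N\<close> finite_subset by blast
    have "(\<Sum>v\<in>S. scal (c v) v) = (\<Sum>m\<in>M. scal (c (monomial m)) (monomial m))"
      unfolding M(2) by (simp add: sum.reindex[OF inj_on_subset[OF inj_monomial]])
    then have "Poly_Mapping.lookup (\<Sum>m\<in>M. scal (c (monomial m)) (monomial m)) mn = 0"
      using zero by simp
    then show "c v = 0"
      using mn by (simp add: lookup_sum_scal_monomial[OF \<open>finite M\<close>])
  qed
qed (use monomials card_image[OF inj_on_subset[OF inj_monomial]] in auto)

lemma mdeg_eq_sum_UNIV: "mdeg (mn :: 'x::finite \<Rightarrow>\<^sub>0 nat) = (\<Sum>x\<in>UNIV. Poly_Mapping.lookup mn x)"
  unfolding mdeg_def by (rule sum.mono_neutral_left) (auto simp: in_keys_iff)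

lemma mdeg_add: "mdeg (mn + mn' :: 'x::finite \<Rightarrow>\<^sub>0 nat) = mdeg mn + mdeg mn'"
  by (simp add: mdeg_eq_sum_UNIV lookup_add sum.distrib)

lemma mdeg_single [simp]: "mdeg (Poly_Mapping.single (x::'x::finite) a) = a"
  by (simp add: mdeg_eq_sum_UNIV lookup_single when_def)

lemma mdeg_zero [simp]: "mdeg 0 = 0"
  by (simp add: mdeg_def)

lemma lookup_le_mdeg: "Poly_Mapping.lookup mn x \<le> mdeg (mn :: 'x::finite \<Rightarrow>\<^sub>0 nat)"
  unfolding mdeg_eq_sum_UNIV by (rule member_le_sum) auto

lemma finite_mdeg_le: "finite {mn :: 'x::finite \<Rightarrow>\<^sub>0 nat. mdeg mn \<le> d}"
proof -
  define B where "B = {f :: 'x \<Rightarrow> nat. \<forall>x. f x \<in> {..d}}"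
  have "finite B"
    using finite_set_of_finite_funs[of "UNIV :: 'x set" "{..d}" 0] by (simp add: B_def)
  then have "finite (Poly_Mapping.lookup -` B)"
    by (rule finite_vimageI) (metis injI poly_mapping.lookup_inject)
  moreover have "{mn. mdeg mn \<le> d} \<subseteq> Poly_Mapping.lookup -` B"
    using lookup_le_mdeg order_trans by (fastforce simp: B_def)
  ultimately show ?thesis
    by (rule finite_subset[rotated])
qed

lemma monomials_with_support_insert:
  fixes x :: "'x::finite"
  assumes "x \<notin> F"
  shows "{mn. Poly_Mapping.keys mn = insert x F \<and> mdeg mn \<le> d}
    = (\<lambda>(a, mn). mn + Poly_Mapping.single x a) `
        (SIGMA a:{1..d}. {mn. Poly_Mapping.keys mn = F \<and> mdeg mn \<le> d - a})"
    (is "?lhs = ?f ` ?rhs")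
proof (intro equalityI subsetI)
  fix mn assume "mn \<in> ?lhs"
  then have keys: "Poly_Mapping.keys mn = insert x F" and deg: "mdeg mn \<le> d"
    by auto
  define a where "a = Poly_Mapping.lookup mn x"
  define mn' where "mn' = mn - Poly_Mapping.single x a"
  have lookup_mn': "Poly_Mapping.lookup mn' y = (if y = x then 0 else Poly_Mapping.lookup mn y)" for y
    by (simp add: mn'_def lookup_minus lookup_single when_def a_def)
  have split: "mn = mn' + Poly_Mapping.single x a"
    by (rule poly_mapping_eqI) (simp add: lookup_mn' lookup_add lookup_single when_def a_def)
  have "Poly_Mapping.keys mn' = F"
    using keys assms by (auto simp: in_keys_iff lookup_mn' split: if_splits)
  moreover have "1 \<le> a"
    using keys unfolding a_def by (metis insertI1 in_keys_iff less_one not_le)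
  moreover have "a \<le> d"
    using lookup_le_mdeg[of mn x] deg by (simp add: a_def)
  moreover have "mdeg mn' \<le> d - a"
    using deg by (subst (asm) split) (simp add: mdeg_add)
  ultimately show "mn \<in> ?f ` ?rhs"
    using split by (auto simp: image_iff)
next
  fix mn assume "mn \<in> ?f ` ?rhs"
  then obtain a mn' where a: "1 \<le> a" "a \<le> d" and keys: "Poly_Mapping.keys mn' = F"
    and deg: "mdeg mn' \<le> d - a" and mn: "mn = mn' + Poly_Mapping.single x a"
    by auto
  have "Poly_Mapping.keys mn = insert x F"
    using keys a assms by (auto simp: mn in_keys_iff lookup_add lookup_single when_def split: if_splits)
  moreover have "mdeg mn \<le> d"
    using mn deg a by (simp add: mdeg_add)
  ultimately show "mn \<in> ?lhs"
    by simp
qed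

lemma sum_choose_diff: "(\<Sum>a\<in>{1..d}. (d - a) choose k) = d choose Suc k"
proof -
  have "(\<Sum>a\<in>{1..d}. (d - a) choose k) = (\<Sum>j<d. j choose k)"
    by (rule sum.reindex_bij_witness[of _ "\<lambda>j. d - j" "\<lambda>a. d - a"]) auto
  also have "\<dots> = d choose Suc k"
    by (cases d) (simp_all add: lessThan_Suc_atMost sum_choose_upper)
  finally show ?thesis .
qed

lemma card_monomials_with_support:
  fixes F :: "'x::finite set"
  shows "card {mn. Poly_Mapping.keys mn = F \<and> mdeg mn \<le> d} = d choose card F"
proof (induction F arbitrary: d rule: finite_induct[OF finite])
  case 1
  have "{mn :: 'x \<Rightarrow>\<^sub>0 nat. Poly_Mapping.keys mn = {} \<and> mdeg mn \<le> d} = {0}"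
    by auto
  then show ?case
    by simp
next
  case (2 x F)
  let ?f = "\<lambda>(a, mn). mn + Poly_Mapping.single x a"
  let ?B = "\<lambda>e. {mn :: 'x \<Rightarrow>\<^sub>0 nat. Poly_Mapping.keys mn = F \<and> mdeg mn \<le> e}"
  have "inj_on ?f (SIGMA a:{1..d}. ?B (d - a))"
  proof (rule inj_onI)
    fix p p' assume "p \<in> (SIGMA a:{1..d}. ?B (d - a))" "p' \<in> (SIGMA a:{1..d}. ?B (d - a))"
      and eq: "?f p = ?f p'"
    then obtain a a' mn mn' where p: "p = (a, mn)" "p' = (a', mn')"
      and "Poly_Mapping.keys mn = F" "Poly_Mapping.keys mn' = F"
      by auto
    then have "Poly_Mapping.lookup mn x = 0" "Poly_Mapping.lookup mn' x = 0"
      using 2(2) by (auto simp: in_keys_iff)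
    then have "a = a'"
      using arg_cong[OF eq, of "\<lambda>mn. Poly_Mapping.lookup mn x"] by (simp add: p lookup_add)
    then show "p = p'"
      using eq by (simp add: p)
  qed
  moreover have "finite (?B e)" for e
    by (rule finite_subset[OF _ finite_mdeg_le[of e]]) auto
  ultimately have "card {mn. Poly_Mapping.keys mn = insert x F \<and> mdeg mn \<le> d}
      = (\<Sum>a\<in>{1..d}. card (?B (d - a)))"
    by (simp add: monomials_with_support_insert[OF 2(2)] card_image)
  also have "\<dots> = d choose card (insert x F)"
    using 2 sum_choose_diff[of d "card F"] by simp
  finally show ?case .
qed

definition sqfree_monomial :: "'x set \<Rightarrow> ('x \<Rightarrow>\<^sub>0 nat)" where
  "sqfree_monomial S = (\<Sum>x\<in>S. Poly_Mapping.single x 1)"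

definition sqfree_gens :: "'x set set \<Rightarrow> ('x, 'k::field) mpoly set" where
  "sqfree_gens SS = (\<lambda>S. monomial (sqfree_monomial S)) ` SS"

text \<open>The Stanley--Reisner complex of the ideal generated by the squarefree monomials with
  supports in \<open>SS\<close>: its faces are the supports of the monomials outside the ideal.\<close>
definition stanley_reisner :: "'x set set \<Rightarrow> 'x set set" where
  "stanley_reisner SS = {F. \<forall>S\<in>SS. \<not> S \<subseteq> F}"

lemma lookup_sqfree_monomial:
  "finite S \<Longrightarrow> Poly_Mapping.lookup (sqfree_monomial S) x = (if x \<in> S then 1 else 0)"
  by (simp add: sqfree_monomial_def lookup_sum lookup_single when_def)

lemma sqfree_monomial_dvd_iff:
  assumes "finite S"
  shows "(\<exists>a. mn = a + sqfree_monomial S) \<longleftrightarrow> S \<subseteq> Poly_Mapping.keys mn"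
proof
  assume "\<exists>a. mn = a + sqfree_monomial S"
  then show "S \<subseteq> Poly_Mapping.keys mn"
    using assms by (auto simp: in_keys_iff lookup_add lookup_sqfree_monomial)
next
  assume "S \<subseteq> Poly_Mapping.keys mn"
  then have "mn = (mn - sqfree_monomial S) + sqfree_monomial S"
    using assms by (intro poly_mapping_eqI) (simp add: lookup_add lookup_minus lookup_sqfree_monomial subset_iff in_keys_iff)
  then show "\<exists>a. mn = a + sqfree_monomial S" ..
qed

lemma keys_ideal_gen_monomials:
  assumes "p \<in> ideal_gen (monomial ` Ms :: ('x, 'k::field) mpoly set)" "mn \<in> Poly_Mapping.keys p"
  shows "\<exists>m\<in>Ms. \<exists>a. mn = a + m"
proof -
  obtain c where p: "p = (\<Sum>g\<in>monomial ` Ms. c g * g)"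
    using assms(1) by (auto simp: ideal_gen_def)
  have "mn \<in> (\<Union>g\<in>monomial ` Ms. Poly_Mapping.keys (c g * g))"
    using assms(2) unfolding p by (rule subsetD[OF keys_sum])
  then obtain m where "m \<in> Ms" "mn \<in> Poly_Mapping.keys (c (monomial m) * monomial m)"
    by blast
  moreover have "Poly_Mapping.keys (c (monomial m) * monomial m)
      \<subseteq> {a + b |a b. a \<in> Poly_Mapping.keys (c (monomial m)) \<and> b \<in> {m}}"
    using keys_mult[of "c (monomial m)" "monomial m"] by simp
  ultimately show ?thesis
    by blast
qed

lemma monomial_multiple_in_ideal_gen:
  assumes "finite Ms" "m \<in> Ms"
  shows "monomial (a + m) \<in> ideal_gen (monomial ` Ms :: ('x, 'k::field) mpoly set)"
proof -
  let ?c = "\<lambda>g. if g = monomial m then monomial a else (0 :: ('x, 'k) mpoly)"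
  have "(\<Sum>g\<in>monomial ` Ms. ?c g * g) = (\<Sum>g\<in>monomial ` Ms. if g = monomial m then monomial a * g else 0)"
    by (rule sum.cong) simp_all
  also have "\<dots> = monomial a * monomial m"
    using assms by (subst sum.delta) simp_all
  also have "\<dots> = monomial (a + m)"
    by (simp add: mult_single)
  finally have eq: "(\<Sum>g\<in>monomial ` Ms. ?c g * g) = monomial (a + m)" .
  show ?thesis
    unfolding ideal_gen_def mem_Collect_eq by (rule exI[of _ ?c]) (simp add: eq)
qed

text \<open>The monomials of degree \<open>i\<close> in a monomial ideal form a basis of its degree \<open>i\<close> part.\<close>
lemma hilb_fun_monomial_ideal:
  fixes Ms :: "('x::finite \<Rightarrow>\<^sub>0 nat) set"
  assumes "finite Ms"
  shows "hilb_fun TYPE('k::field) (monomial ` Ms) i = card {mn. mdeg mn = i \<and> \<not> (\<exists>m\<in>Ms. \<exists>a. mn = a + m)}"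
proof -
  define N where "N = {mn :: 'x \<Rightarrow>\<^sub>0 nat. mdeg mn = i}"
  define I where "I = {mn \<in> N. \<exists>m\<in>Ms. \<exists>a. mn = a + m}"
  have "finite N"
    unfolding N_def by (rule finite_subset[OF _ finite_mdeg_le[of i]]) auto
  have "mpoly.dim (homog i :: ('x, 'k) mpoly set) = card N"
    by (rule dim_eq_card_monomials[OF \<open>finite N\<close>]) (auto simp: homog_def N_def)
  moreover have "mpoly.dim (homog i \<inter> ideal_gen (monomial ` Ms :: ('x, 'k) mpoly set)) = card I"
  proof (rule dim_eq_card_monomials)
    show "finite I"
      using \<open>finite N\<close> by (simp add: I_def)
    show "homog i \<inter> ideal_gen (monomial ` Ms) \<subseteq> {p. Poly_Mapping.keys p \<subseteq> I}"
      using keys_ideal_gen_monomials by (fastforce simp: homog_def N_def I_def)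
    show "monomial ` I \<subseteq> homog i \<inter> ideal_gen (monomial ` Ms :: ('x, 'k) mpoly set)"
      using monomial_multiple_in_ideal_gen[OF assms] by (auto simp: homog_def N_def I_def)
  qed
  moreover have "card N - card I = card (N - I)"
    using \<open>finite N\<close> by (intro card_Diff_subset[symmetric]) (auto simp: I_def)
  moreover have "N - I = {mn. mdeg mn = i \<and> \<not> (\<exists>m\<in>Ms. \<exists>a. mn = a + m)}"
    by (auto simp: N_def I_def)
  ultimately show ?thesis
    unfolding hilb_fun_def by simp
qed

text \<open>A monomial lies outside the ideal iff its support is a face, and there are
  \<open>d choose card F\<close> monomials of degree at most \<open>d\<close> with support \<open>F\<close>.\<close>
lemma sum_hilb_fun_sqfree_gens:
  fixes SS :: "'x::finite set set"
  shows "(\<Sum>i\<le>d. hilb_fun TYPE('k::field) (sqfree_gens SS) i)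
    = (\<Sum>F\<in>stanley_reisner SS. d choose card F)"
proof -
  let ?M = "\<lambda>P. {mn :: 'x \<Rightarrow>\<^sub>0 nat. P mn}"
  have outside: "(\<not> (\<exists>m\<in>sqfree_monomial ` SS. \<exists>a. mn = a + m)) \<longleftrightarrow> Poly_Mapping.keys mn \<in> stanley_reisner SS"
    for mn :: "'x \<Rightarrow>\<^sub>0 nat"
    by (auto simp: stanley_reisner_def sqfree_monomial_dvd_iff)
  have gens: "sqfree_gens SS = monomial ` sqfree_monomial ` SS"
    by (simp add: sqfree_gens_def image_image)
  have "hilb_fun TYPE('k) (sqfree_gens SS) i
      = card (?M (\<lambda>mn. mdeg mn = i \<and> Poly_Mapping.keys mn \<in> stanley_reisner SS))" for i
    unfolding gens hilb_fun_monomial_ideal[OF finite_imageI[OF finite]] outside ..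
  moreover have finite_deg: "finite (?M (\<lambda>mn. mdeg mn \<le> d \<and> P mn))" for d P
    by (rule finite_subset[OF _ finite_mdeg_le[of d]]) auto
  ultimately have "(\<Sum>i\<le>d. hilb_fun TYPE('k) (sqfree_gens SS) i)
      = card (\<Union>i\<le>d. ?M (\<lambda>mn. mdeg mn = i \<and> Poly_Mapping.keys mn \<in> stanley_reisner SS))"
    by (subst card_UN_disjoint) (auto intro: finite_subset[OF _ finite_deg])
  also have "(\<Union>i\<le>d. ?M (\<lambda>mn. mdeg mn = i \<and> Poly_Mapping.keys mn \<in> stanley_reisner SS))
      = (\<Union>F\<in>stanley_reisner SS. ?M (\<lambda>mn. Poly_Mapping.keys mn = F \<and> mdeg mn \<le> d))"
    by auto
  also have "card \<dots> = (\<Sum>F\<in>stanley_reisner SS. d choose card F)"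
    by (subst card_UN_disjoint) (auto intro: finite_subset[OF _ finite_deg] simp: card_monomials_with_support)
  finally show ?thesis .
qed

section \<open>The Hilbert--Samuel polynomial of a squarefree monomial ideal\<close>

definition binomial_poly :: "nat \<Rightarrow> real poly" where
  "binomial_poly k = smult (1 / fact k) (\<Prod>i<k. [:- of_nat i, 1:])"

lemma poly_binomial_poly: "poly (binomial_poly k) (real d) = real (d choose k)"
  by (simp add: binomial_poly_def poly_prod binomial_gbinomial gbinomial_prod_rev atLeast0LessThan)

lemma degree_binomial_poly: "degree (binomial_poly k) = k"
  by (simp add: binomial_poly_def degree_prod_sum_eq)

lemma lead_coeff_binomial_poly: "lead_coeff (binomial_poly k) = 1 / fact k"
proof -
  have "lead_coeff (\<Prod>i<k. [:- of_nat i, 1::real:]) = 1"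
    by (simp add: lead_coeff_prod)
  then show ?thesis
    by (simp add: binomial_poly_def degree_prod_sum_eq)
qed

lemma coeff_sum_binomial_poly:
  assumes "finite A" "\<forall>a\<in>A. f a \<le> k"
  shows "coeff (\<Sum>a\<in>A. binomial_poly (f a)) k = card {a\<in>A. f a = k} / fact k"
proof -
  have "coeff (binomial_poly (f a)) k = (if f a = k then 1 / fact k else 0)" if "a \<in> A" for a
    using assms(2) that degree_binomial_poly[of "f a"]
    by (auto simp: lead_coeff_binomial_poly[symmetric] coeff_eq_0)
  then have "coeff (\<Sum>a\<in>A. binomial_poly (f a)) k = (\<Sum>a\<in>A. if f a = k then 1 / fact k else 0)"
    by (simp add: coeff_sum)
  also have "\<dots> = card {a\<in>A. f a = k} / fact k"
    using assms(1) by (simp add: sum.If_cases Int_def)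
  finally show ?thesis .
qed

lemma degree_sum_binomial_poly:
  assumes "finite A" "\<forall>a\<in>A. f a \<le> k" "\<exists>a\<in>A. f a = k"
  shows "degree (\<Sum>a\<in>A. binomial_poly (f a)) = k"
proof (rule antisym)
  show "degree (\<Sum>a\<in>A. binomial_poly (f a)) \<le> k"
    using assms(1,2) by (intro degree_sum_le) (simp_all add: degree_binomial_poly)
  have "card {a\<in>A. f a = k} \<noteq> 0"
    using assms by (auto simp: card_eq_0_iff)
  then show "k \<le> degree (\<Sum>a\<in>A. binomial_poly (f a))"
    using coeff_sum_binomial_poly[OF assms(1,2)] by (intro le_degree) simp
qed

lemma samuel_poly_eqI:
  assumes "\<And>d. real (\<Sum>i\<le>d. hilb_fun K Gs i) = poly P (real d)"
  shows "samuel_poly K Gs = P"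
  unfolding samuel_poly_def
proof (rule the_equality)
  fix Q assume "\<forall>\<^sub>F d in sequentially. real (\<Sum>i\<le>d. hilb_fun K Gs i) = poly Q (real d)"
  then obtain N where "\<And>d. d \<ge> N \<Longrightarrow> poly P (real d) = poly Q (real d)"
    using assms by (auto simp: eventually_sequentially)
  then have "real ` {N..} \<subseteq> {x. poly (P - Q) x = 0}"
    by auto
  moreover have "infinite (real ` {N..})"
    using infinite_Ici[of N] by (simp add: finite_image_iff)
  ultimately show "Q = P"
    using poly_roots_finite[of "P - Q"] finite_subset by auto
qed (use assms in simp)

lemma samuel_poly_sqfree_gens:
  fixes SS :: "'x::finite set set"
  shows "samuel_poly TYPE('k::field) (sqfree_gens SS) = (\<Sum>F\<in>stanley_reisner SS. binomial_poly (card F))"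
  by (rule samuel_poly_eqI) (simp add: sum_hilb_fun_sqfree_gens poly_sum poly_binomial_poly)

lemma quot_dim_multiplicity_sqfree_gens:
  fixes SS :: "'x::finite set set"
  assumes "\<forall>F\<in>stanley_reisner SS. card F \<le> r" "\<exists>F\<in>stanley_reisner SS. card F = r"
  shows "quot_dim TYPE('k::field) (sqfree_gens SS) = r"
    and "multiplicity TYPE('k) (sqfree_gens SS) = card {F\<in>stanley_reisner SS. card F = r}"
  using degree_sum_binomial_poly[OF finite assms] coeff_sum_binomial_poly[OF finite assms(1)]
  by (simp_all add: quot_dim_def multiplicity_def samuel_poly_sqfree_gens)

section \<open>Reachability along oriented edges\<close>

definition arcs :: "('e \<Rightarrow> 'v \<times> 'v) \<Rightarrow> ('e \<times> bool) set \<Rightarrow> ('v \<times> 'v) set" where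
  "arcs ends C = {(otail ends oe, ohead ends oe) | oe. oe \<in> C}"

definition reaches_all :: "('e \<Rightarrow> 'v \<times> 'v) \<Rightarrow> 'v \<Rightarrow> ('e \<times> bool) set \<Rightarrow> bool" where
  "reaches_all ends q C \<longleftrightarrow> (\<forall>v. (q, v) \<in> (arcs ends C)\<^sup>*)"

lemma arcsI: "oe \<in> C \<Longrightarrow> (otail ends oe, ohead ends oe) \<in> arcs ends C"
  unfolding arcs_def by blast

lemma ends_fst_cases:
  "ends (fst oe) = (ohead ends oe, otail ends oe) \<or> ends (fst oe) = (otail ends oe, ohead ends oe)"
  by (cases oe) (auto simp: ohead_def otail_def)

lemma same_edge_cases:
  assumes "fst oe = fst oe'"
  shows "oe = oe' \<or> ohead ends oe = otail ends oe' \<and> otail ends oe = ohead ends oe'"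
  using assms by (cases oe; cases oe') (auto simp: ohead_def otail_def)

lemma adj_in_mono: "F \<subseteq> F' \<Longrightarrow> A \<subseteq> A' \<Longrightarrow> adj_in ends F A \<subseteq> adj_in ends F' A'"
  by (auto simp: adj_in_def)

lemma sym_adj_in: "sym (adj_in ends F A)"
  by (auto simp: adj_in_def intro: symI)

lemma adj_in_rtrancl_sym: "(u, v) \<in> (adj_in ends F A)\<^sup>* \<Longrightarrow> (v, u) \<in> (adj_in ends F A)\<^sup>*"
  using sym_rtrancl[OF sym_adj_in] by (rule symD)

lemma arc_in_adj_in: "oe \<in> C \<Longrightarrow> (otail ends oe, ohead ends oe) \<in> adj_in ends (fst ` C) UNIV"
  using ends_fst_cases[of ends oe] by (auto simp: adj_in_def)

lemma arcs_subset_adj_in: "arcs ends C \<subseteq> adj_in ends (fst ` C) UNIV"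
  using arc_in_adj_in by (auto simp: arcs_def)

lemma arcs_mono: "C \<subseteq> D \<Longrightarrow> arcs ends C \<subseteq> arcs ends D"
  by (auto simp: arcs_def)

lemma arcs_vimage_fst: "arcs ends (fst -` F) = adj_in ends F UNIV"
proof (intro equalityI subsetI)
  fix p assume "p \<in> adj_in ends F UNIV"
  then obtain u v e where uv: "p = (u, v)" "e \<in> F" "ends e = (u, v) \<or> ends e = (v, u)"
    by (auto simp: adj_in_def)
  then have "p = (otail ends (e, ends e = (v, u)), ohead ends (e, ends e = (v, u)))"
    by (auto simp: ohead_def otail_def)
  moreover have "(e, ends e = (v, u)) \<in> fst -` F"
    using uv(2) by simp
  ultimately show "p \<in> arcs ends (fst -` F)"
    unfolding arcs_def by (intro CollectI exI[of _ "(e, ends e = (v, u))"]) simp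
qed (use arcs_subset_adj_in[of ends "fst -` F"] in auto)

lemma rtrancl_restrict_reachable:
  assumes "(a, b) \<in> r\<^sup>*"
  shows "(a, b) \<in> (r \<inter> (r\<^sup>* `` {a}) \<times> (r\<^sup>* `` {a}))\<^sup>*"
  using assms
proof (induction rule: rtrancl_induct)
  case (step y z)
  then have "(y, z) \<in> r \<inter> (r\<^sup>* `` {a}) \<times> (r\<^sup>* `` {a})"
    by auto
  with step.IH show ?case
    by (rule rtrancl_into_rtrancl)
qed simp

lemma rtrancl_leaves_set:
  assumes "(a, b) \<in> r\<^sup>*" "a \<notin> A" "b \<in> A"
  obtains x y where "(x, y) \<in> r" "x \<notin> A" "y \<in> A"
  using assms by (induction rule: rtrancl_induct) auto

lemma connected_on_UNIV_iff_reachable_from: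
  "connected_on ends F UNIV \<longleftrightarrow> (\<forall>v. (q, v) \<in> (adj_in ends F UNIV)\<^sup>*)"
  by (auto simp: connected_on_def intro: rtrancl_trans adj_in_rtrancl_sym)

lemma connected_on_iff_reaches_all: "connected_on ends F UNIV \<longleftrightarrow> reaches_all ends q (fst -` F)"
  by (simp add: connected_on_UNIV_iff_reachable_from[of _ _ q] reaches_all_def arcs_vimage_fst)

lemma reaches_all_imp_connected_on:
  assumes "reaches_all ends q C"
  shows "connected_on ends (fst ` C) UNIV"
  using assms rtrancl_mono[OF arcs_subset_adj_in]
  by (auto simp: connected_on_UNIV_iff_reachable_from[of _ _ q] reaches_all_def)

lemma card_Compl_finite: "card (- (A :: 'a::finite set)) = card (UNIV :: 'a set) - card A"
  using card_Diff_subset[of A UNIV] by (simp add: Compl_eq_Diff_UNIV)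

lemma card_ge_if_reaches_all:
  fixes ends :: "'e::finite \<Rightarrow> 'v::finite \<times> 'v"
  assumes "reaches_all ends q C"
  shows "card (UNIV :: 'v set) - 1 \<le> card C"
proof -
  have heads: "- {q} \<subseteq> ohead ends ` C"
  proof
    fix v assume "v \<in> - {q}"
    have "(q, v) \<in> (arcs ends C)\<^sup>*"
      using assms by (simp add: reaches_all_def)
    then obtain u where "(u, v) \<in> arcs ends C"
      using \<open>v \<in> - {q}\<close> by (cases rule: rtranclE) auto
    then show "v \<in> ohead ends ` C"
      by (auto simp: arcs_def)
  qed
  have "card (- {q}) \<le> card (ohead ends ` C)"
    using heads by (intro card_mono) simp_all
  also have "\<dots> \<le> card C"
    by (rule card_image_le) simp
  finally show ?thesis
    by (simp add: card_Compl_finite[of "{q}"])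
qed

section \<open>Spanning arborescences and spanning trees\<close>

definition arborescences :: "('e \<Rightarrow> 'v::finite \<times> 'v) \<Rightarrow> 'v \<Rightarrow> ('e \<times> bool) set set" where
  "arborescences ends q = {C. reaches_all ends q C \<and> card C = card (UNIV :: 'v set) - 1}"

text \<open>Breadth-first search: a reachable set \<open>R\<close> spanned by a tree \<open>C\<close> of arcs from \<open>D\<close>
  grows by one arc leaving \<open>R\<close>. The tree arcs stay inside \<open>R\<close>, so the new arc lies on a
  new edge.\<close>
lemma reaches_all_grow_tree:
  fixes ends :: "'e::finite \<Rightarrow> 'v::finite \<times> 'v"
  assumes D: "reaches_all ends q D" and "k < card (UNIV :: 'v set)"
  shows "\<exists>C R. C \<subseteq> D \<and> q \<in> R \<and> card R = Suc k \<and> card C = k \<and> inj_on fst C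
    \<and> (\<forall>oe\<in>C. ohead ends oe \<in> R \<and> otail ends oe \<in> R) \<and> (\<forall>v\<in>R. (q, v) \<in> (arcs ends C)\<^sup>*)"
  using assms(2)
proof (induction k)
  case 0
  show ?case
    by (intro exI[of _ "{}"] exI[of _ "{q}"]) simp
next
  case (Suc k)
  then obtain C R where C: "C \<subseteq> D" "q \<in> R" "card R = Suc k" "card C = k" "inj_on fst C"
    and inside: "\<forall>oe\<in>C. ohead ends oe \<in> R \<and> otail ends oe \<in> R"
    and reach: "\<forall>v\<in>R. (q, v) \<in> (arcs ends C)\<^sup>*"
    by auto
  have "R \<noteq> UNIV"
    using C(3) Suc.prems by auto
  then obtain v where "v \<notin> R"
    by auto
  have "(q, v) \<in> (arcs ends D)\<^sup>*"
    using D by (simp add: reaches_all_def)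
  then obtain x y where "(x, y) \<in> arcs ends D" "x \<in> R" "y \<notin> R"
    using rtrancl_leaves_set[of q v _ "- R"] C(2) \<open>v \<notin> R\<close> by auto
  then obtain oe where oe: "oe \<in> D" "otail ends oe \<in> R" "ohead ends oe \<notin> R"
    by (auto simp: arcs_def)
  have new_edge: "fst oe \<notin> fst ` C"
  proof
    assume "fst oe \<in> fst ` C"
    then obtain oe' where "oe' \<in> C" "fst oe' = fst oe"
      by auto
    then show False
      using same_edge_cases[of oe' oe ends] inside oe(2,3) by auto
  qed
  then have "oe \<notin> C"
    by auto
  have reach': "(q, w) \<in> (arcs ends (insert oe C))\<^sup>*" if "w \<in> insert (ohead ends oe) R" for w
  proof -
    have sub: "(arcs ends C)\<^sup>* \<subseteq> (arcs ends (insert oe C))\<^sup>*"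
      by (intro rtrancl_mono arcs_mono) auto
    from that consider "w \<in> R" | "w = ohead ends oe"
      by auto
    then show ?thesis
    proof cases
      case 1
      then show ?thesis
        using reach sub by auto
    next
      case 2
      have "(q, otail ends oe) \<in> (arcs ends (insert oe C))\<^sup>*"
        using reach oe(2) sub by auto
      moreover have "(otail ends oe, ohead ends oe) \<in> arcs ends (insert oe C)"
        by (simp add: arcsI)
      ultimately show ?thesis
        unfolding 2 by (rule rtrancl_into_rtrancl)
    qed
  qed
  show ?case
  proof (intro exI conjI)
    show "insert oe C \<subseteq> D" "q \<in> insert (ohead ends oe) R"
      using C(1,2) oe(1) by auto
    show "card (insert (ohead ends oe) R) = Suc (Suc k)" "card (insert oe C) = Suc k"
      using C(3,4) oe(3) \<open>oe \<notin> C\<close> by simp_all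
    show "inj_on fst (insert oe C)"
      using C(5) new_edge \<open>oe \<notin> C\<close> by simp
    show "\<forall>oe'\<in>insert oe C. ohead ends oe' \<in> insert (ohead ends oe) R \<and> otail ends oe' \<in> insert (ohead ends oe) R"
      using inside oe(2) by auto
  qed (use reach' in blast)
qed

lemma reaches_all_obtain_arborescence:
  fixes ends :: "'e::finite \<Rightarrow> 'v::finite \<times> 'v"
  assumes "reaches_all ends q D"
  obtains C where "C \<subseteq> D" "C \<in> arborescences ends q" "inj_on fst C"
proof -
  have lt: "card (UNIV :: 'v set) - 1 < card (UNIV :: 'v set)"
    by (simp add: finite_UNIV_card_ge_0)
  obtain C R where C: "C \<subseteq> D" "q \<in> R" "card R = Suc (card (UNIV :: 'v set) - 1)"
      "card C = card (UNIV :: 'v set) - 1" "inj_on fst C" "\<forall>oe\<in>C. ohead ends oe \<in> R \<and> otail ends oe \<in> R"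
      "\<forall>v\<in>R. (q, v) \<in> (arcs ends C)\<^sup>*"
    using reaches_all_grow_tree[OF assms lt] by auto
  then have "card R = card (UNIV :: 'v set)"
    by (simp add: finite_UNIV_card_ge_0)
  then have "R = UNIV"
    by (simp add: card_eq_UNIV_imp_eq_UNIV)
  with C show ?thesis
    by (intro that) (auto simp: arborescences_def reaches_all_def)
qed

lemma card_ge_if_connected_on:
  fixes ends :: "'e::finite \<Rightarrow> 'v::finite \<times> 'v"
  assumes "connected_on ends F UNIV"
  shows "card (UNIV :: 'v set) - 1 \<le> card F"
proof -
  fix q :: 'v
  obtain C where C: "C \<subseteq> fst -` F" "C \<in> arborescences ends q" "inj_on fst C"
    using assms connected_on_iff_reaches_all reaches_all_obtain_arborescence by metis
  then have "card C = card (fst ` C)"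
    by (simp add: card_image)
  also have "\<dots> \<le> card F"
    using C(1) by (intro card_mono) auto
  finally show ?thesis
    using C(2) by (simp add: arborescences_def)
qed

lemma inj_on_fst_arborescence:
  fixes ends :: "'e::finite \<Rightarrow> 'v::finite \<times> 'v"
  assumes "C \<in> arborescences ends q"
  shows "inj_on fst C"
proof (rule eq_card_imp_inj_on)
  have "card (UNIV :: 'v set) - 1 \<le> card (fst ` C)"
    using assms by (intro card_ge_if_connected_on[of ends] reaches_all_imp_connected_on[of ends q])
      (simp add: arborescences_def)
  then show "card (fst ` C) = card C"
    using assms card_image_le[of C fst] by (simp add: arborescences_def)
qed simp

lemma fst_arborescence_spanning_tree:
  fixes ends :: "'e::finite \<Rightarrow> 'v::finite \<times> 'v"
  assumes "C \<in> arborescences ends q"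
  shows "fst ` C \<in> spanning_trees ends"
  using assms inj_on_fst_arborescence[OF assms] reaches_all_imp_connected_on[of ends q C]
  by (simp add: arborescences_def spanning_trees_def card_image)

lemma spanning_tree_obtain_arborescence:
  fixes ends :: "'e::finite \<Rightarrow> 'v::finite \<times> 'v"
  assumes "T \<in> spanning_trees ends"
  obtains C where "C \<in> arborescences ends q" "fst ` C = T"
proof -
  have "reaches_all ends q (fst -` T)"
    using assms connected_on_iff_reaches_all[of ends T q] by (simp add: spanning_trees_def)
  then obtain C where C: "C \<subseteq> fst -` T" "C \<in> arborescences ends q" "inj_on fst C"
    by (rule reaches_all_obtain_arborescence)
  have "fst ` C = T"
  proof (rule card_subset_eq)
    show "fst ` C \<subseteq> T"
      using C(1) by auto
    show "card (fst ` C) = card T"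
      using C(2,3) assms by (simp add: card_image arborescences_def spanning_trees_def)
  qed simp
  with C(2) show ?thesis
    by (rule that)
qed

lemma spanning_tree_remove_edge:
  fixes ends :: "'e::finite \<Rightarrow> 'v::finite \<times> 'v"
  assumes "T \<in> spanning_trees ends" "e \<in> T"
  shows "\<not> connected_on ends (T - {e}) UNIV"
proof
  assume "connected_on ends (T - {e}) UNIV"
  then have "card (UNIV :: 'v set) - 1 \<le> card (T - {e})"
    by (rule card_ge_if_connected_on)
  then have "card (UNIV :: 'v set) - 1 \<le> card T - 1"
    using assms(2) by simp
  moreover have "card T > 0"
    using assms(2) by (auto simp: card_gt_0_iff)
  ultimately show False
    using assms(1) by (simp add: spanning_trees_def)
qed

text \<open>Walking from \<open>q\<close> to an endpoint of \<open>e\<close> inside \<open>T\<close>, the first use of \<open>e\<close> starts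
  at an endpoint reached without \<open>e\<close>.\<close>
lemma connected_on_reaches_endpoint_without_edge:
  assumes "connected_on ends T UNIV" "e \<in> T"
  shows "(q, fst (ends e)) \<in> (adj_in ends (T - {e}) UNIV)\<^sup>* \<or> (q, snd (ends e)) \<in> (adj_in ends (T - {e}) UNIV)\<^sup>*"
proof -
  let ?U = "adj_in ends (T - {e}) UNIV"
  have "(q, z) \<in> ?U\<^sup>* \<or> (q, fst (ends e)) \<in> ?U\<^sup>* \<or> (q, snd (ends e)) \<in> ?U\<^sup>*"
    if "(q, z) \<in> (adj_in ends T UNIV)\<^sup>*" for z
    using that
  proof (induction rule: rtrancl_induct)
    case (step y z)
    obtain e' where e': "e' \<in> T" "ends e' = (y, z) \<or> ends e' = (z, y)"
      using step.hyps(2) by (auto simp: adj_in_def)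
    show ?case
    proof (cases "e' = e")
      case True
      then have "y = fst (ends e) \<or> y = snd (ends e)"
        using e'(2) by auto
      then show ?thesis
        using step.IH by blast
    next
      case False
      then have "(y, z) \<in> ?U"
        using e' by (auto simp: adj_in_def)
      then show ?thesis
        using step.IH by (meson rtrancl_into_rtrancl)
    qed
  qed simp
  moreover have "(q, fst (ends e)) \<in> (adj_in ends T UNIV)\<^sup>*"
    using assms(1) by (simp add: connected_on_def)
  ultimately show ?thesis
    by blast
qed

lemma reaches_all_without_arc:
  assumes "reaches_all ends q C" "x \<in> C" "inj_on fst C"
  shows "(q, v) \<in> (adj_in ends (fst ` C - {fst x}) UNIV)\<^sup>* \<or> (ohead ends x, v) \<in> (adj_in ends (fst ` C - {fst x}) UNIV)\<^sup>*"
proof -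
  let ?U = "adj_in ends (fst ` C - {fst x}) UNIV"
  have "(q, v) \<in> (arcs ends C)\<^sup>*"
    using assms(1) by (simp add: reaches_all_def)
  then show ?thesis
  proof (induction rule: rtrancl_induct)
    case (step y z)
    obtain oe where oe: "oe \<in> C" "y = otail ends oe" "z = ohead ends oe"
      using step.hyps(2) by (auto simp: arcs_def)
    show ?case
    proof (cases "oe = x")
      case False
      then have "fst oe \<in> fst ` C - {fst x}"
        using assms(2,3) oe(1) by (auto dest: inj_onD)
      then have "(y, z) \<in> ?U"
        using oe ends_fst_cases[of ends oe] by (auto simp: adj_in_def)
      then show ?thesis
        using step.IH by (meson rtrancl_into_rtrancl)
    qed (use oe in simp)
  qed simp
qed

lemma arborescence_head_separated:
  fixes ends :: "'e::finite \<Rightarrow> 'v::finite \<times> 'v"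
  assumes "C \<in> arborescences ends q" "x \<in> C"
  shows "(q, ohead ends x) \<notin> (adj_in ends (fst ` C - {fst x}) UNIV)\<^sup>*"
proof
  assume head: "(q, ohead ends x) \<in> (adj_in ends (fst ` C - {fst x}) UNIV)\<^sup>*"
  have "reaches_all ends q C"
    using assms(1) by (simp add: arborescences_def)
  then have "(q, v) \<in> (adj_in ends (fst ` C - {fst x}) UNIV)\<^sup>*" for v
    using reaches_all_without_arc[OF _ assms(2) inj_on_fst_arborescence[OF assms(1)], where v = v] head
    by (meson rtrancl_trans)
  then have "connected_on ends (fst ` C - {fst x}) UNIV"
    by (simp add: connected_on_UNIV_iff_reachable_from[of _ _ q])
  then show False
    using spanning_tree_remove_edge[OF fst_arborescence_spanning_tree[OF assms(1)]] assms(2) by blast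
qed

text \<open>An arborescence is determined by its underlying tree: if \<open>C\<close> and \<open>C'\<close> used the
  same edge with opposite orientations, neither endpoint of that edge would be reachable
  from \<open>q\<close> in the tree without the edge.\<close>
lemma arborescence_subset_if_same_edges:
  fixes ends :: "'e::finite \<Rightarrow> 'v::finite \<times> 'v"
  assumes C: "C \<in> arborescences ends q" and C': "C' \<in> arborescences ends q"
    and same: "fst ` C = fst ` C'"
  shows "C \<subseteq> C'"
proof
  fix oe assume oe: "oe \<in> C"
  show "oe \<in> C'"
  proof (rule ccontr)
    assume "oe \<notin> C'"
    have "fst oe \<in> fst ` C'"
      using oe same by blast
    then obtain oe' where oe': "oe' \<in> C'" "fst oe' = fst oe"
      by auto
    then have reversed: "ohead ends oe' = otail ends oe" "otail ends oe' = ohead ends oe"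
      using same_edge_cases[of oe' oe ends] \<open>oe \<notin> C'\<close> by auto
    let ?U = "adj_in ends (fst ` C - {fst oe}) UNIV"
    have "(q, ohead ends oe) \<notin> ?U\<^sup>*"
      using arborescence_head_separated[OF C oe] .
    moreover have "(q, otail ends oe) \<notin> ?U\<^sup>*"
      using arborescence_head_separated[OF C' oe'(1)] same oe'(2) reversed(1) by simp
    moreover have "(q, fst (ends (fst oe))) \<in> ?U\<^sup>* \<or> (q, snd (ends (fst oe))) \<in> ?U\<^sup>*"
      using reaches_all_imp_connected_on[of ends q C] C oe
      by (intro connected_on_reaches_endpoint_without_edge) (auto simp: arborescences_def)
    ultimately show False
      using ends_fst_cases[of ends oe] by auto
  qed
qed

lemma card_arborescences:
  fixes ends :: "'e::finite \<Rightarrow> 'v::finite \<times> 'v"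
  shows "card (arborescences ends q) = card (spanning_trees ends)"
proof (rule bij_betw_same_card[of "image fst"], rule bij_betw_imageI)
  show "inj_on (image fst) (arborescences ends q)"
    by (rule inj_onI) (simp add: arborescence_subset_if_same_edges subset_antisym)
  show "image fst ` arborescences ends q = spanning_trees ends"
  proof (intro equalityI subsetI)
    fix T assume "T \<in> spanning_trees ends"
    then obtain C where "C \<in> arborescences ends q" "fst ` C = T"
      by (rule spanning_tree_obtain_arborescence)
    then show "T \<in> image fst ` arborescences ends q"
      by blast
  qed (auto intro: fst_arborescence_spanning_tree)
qed

section \<open>Connected cuts\<close>

definition cut_sets :: "('e \<Rightarrow> 'v \<times> 'v) \<Rightarrow> 'v \<Rightarrow> ('e \<times> bool) set set" where
  "cut_sets ends q = {oedges_between ends A (- A) | A. connected_cut_side ends A \<and> q \<in> - A}"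

definition component_in :: "('e \<Rightarrow> 'v \<times> 'v) \<Rightarrow> 'v set \<Rightarrow> 'v \<Rightarrow> 'v set" where
  "component_in ends A v = {w. (v, w) \<in> (adj_in ends UNIV A)\<^sup>*}"

lemma reaches_all_meets_cut:
  assumes "reaches_all ends q C" "v \<in> A" "q \<notin> A"
  shows "C \<inter> oedges_between ends A (- A) \<noteq> {}"
proof -
  have "(q, v) \<in> (arcs ends C)\<^sup>*"
    using assms(1) by (simp add: reaches_all_def)
  then obtain x y where "(x, y) \<in> arcs ends C" "x \<notin> A" "y \<in> A"
    by (rule rtrancl_leaves_set) (use assms(2,3) in simp_all)
  then obtain oe where "oe \<in> C" "otail ends oe \<notin> A" "ohead ends oe \<in> A"
    unfolding arcs_def by blast
  then have "oe \<in> C \<inter> oedges_between ends A (- A)"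
    by (simp add: oedges_between_def)
  then show ?thesis
    by blast
qed

lemma connected_on_if_reachable_within:
  assumes "q \<in> A" "\<And>x. x \<in> A \<Longrightarrow> (q, x) \<in> (adj_in ends F A)\<^sup>*"
  shows "connected_on ends F A"
  unfolding connected_on_def
proof (intro conjI ballI)
  show "A \<noteq> {}"
    using assms(1) by blast
  fix u w assume "u \<in> A" "w \<in> A"
  with assms(2) show "(u, w) \<in> (adj_in ends F A)\<^sup>*"
    by (metis adj_in_rtrancl_sym rtrancl_trans)
qed

lemma connected_on_reachable:
  "connected_on ends UNIV {v. (q, v) \<in> (arcs ends C)\<^sup>*}"
proof (rule connected_on_if_reachable_within)
  let ?R = "{v. (q, v) \<in> (arcs ends C)\<^sup>*}"
  have sub: "arcs ends C \<inter> ?R \<times> ?R \<subseteq> adj_in ends UNIV ?R"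
    using arcs_subset_adj_in[of ends C] by (auto simp: adj_in_def)
  fix x assume "x \<in> ?R"
  then have "(q, x) \<in> (arcs ends C \<inter> ?R \<times> ?R)\<^sup>*"
    using rtrancl_restrict_reachable[of q x "arcs ends C"] by (simp add: Image_singleton)
  then show "(q, x) \<in> (adj_in ends UNIV ?R)\<^sup>*"
    by (rule subsetD[OF rtrancl_mono[OF sub]])
qed simp

lemma component_in_subset: "v \<in> A \<Longrightarrow> component_in ends A v \<subseteq> A"
proof
  fix w assume "v \<in> A" "w \<in> component_in ends A v"
  then have "(v, w) \<in> (adj_in ends UNIV A)\<^sup>*"
    by (simp add: component_in_def)
  then show "w \<in> A"
    using \<open>v \<in> A\<close> by (induction rule: rtrancl_induct) (auto simp: adj_in_def)
qed

lemma component_in_closed: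
  assumes "v \<in> A" "u \<in> component_in ends A v" "w \<in> A" "(u, w) \<in> adj_in ends UNIV UNIV"
  shows "w \<in> component_in ends A v"
proof -
  have "u \<in> A"
    using component_in_subset[OF assms(1)] assms(2) by (rule subsetD)
  then have "(u, w) \<in> adj_in ends UNIV A"
    using assms(3,4) by (simp add: adj_in_def)
  then show ?thesis
    using assms(2) by (simp add: component_in_def)
qed

lemma connected_on_component_in:
  assumes "v \<in> A"
  shows "connected_on ends UNIV (component_in ends A v)"
proof (rule connected_on_if_reachable_within)
  let ?L = "component_in ends A v"
  have sub: "adj_in ends UNIV A \<inter> ?L \<times> ?L \<subseteq> adj_in ends UNIV ?L"
    by (auto simp: adj_in_def)
  fix x assume "x \<in> ?L"
  then have "(v, x) \<in> (adj_in ends UNIV A \<inter> ?L \<times> ?L)\<^sup>*"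
    using rtrancl_restrict_reachable[of v x "adj_in ends UNIV A"]
    by (simp add: component_in_def Image_singleton)
  then show "(v, x) \<in> (adj_in ends UNIV ?L)\<^sup>*"
    by (rule subsetD[OF rtrancl_mono[OF sub]])
qed (simp add: component_in_def)

lemma connected_on_Compl_component_in:
  assumes conn: "graph_connected ends" and R: "connected_on ends UNIV R" and "v \<notin> R"
  shows "connected_on ends UNIV (- component_in ends (- R) v)"
proof -
  let ?L = "component_in ends (- R) v"
  obtain r where "r \<in> R"
    using R by (auto simp: connected_on_def)
  have "?L \<subseteq> - R"
    using component_in_subset[of v "- R" ends] \<open>v \<notin> R\<close> by simp
  then have RL: "R \<subseteq> - ?L"
    by auto
  have to_r: "(x, r) \<in> (adj_in ends UNIV (- ?L))\<^sup>*" if "x \<notin> ?L" for x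
  proof -
    have "(x, r) \<in> (adj_in ends UNIV UNIV)\<^sup>*"
      using conn by (simp add: graph_connected_def connected_on_def)
    then show ?thesis
      using that
    proof (induction rule: converse_rtrancl_induct)
      case (step x y)
      show ?case
      proof (cases "x \<in> R")
        case True
        then have "(r, x) \<in> (adj_in ends UNIV R)\<^sup>*"
          using R \<open>r \<in> R\<close> by (simp add: connected_on_def)
        then have "(r, x) \<in> (adj_in ends UNIV (- ?L))\<^sup>*"
          by (rule subsetD[OF rtrancl_mono[OF adj_in_mono[OF order_refl RL]]])
        then show ?thesis
          by (rule adj_in_rtrancl_sym)
      next
        case False
        have "y \<notin> ?L"
        proof
          assume "y \<in> ?L"
          moreover have "(y, x) \<in> adj_in ends UNIV UNIV"
            using step.hyps(1) by (rule symD[OF sym_adj_in])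
          ultimately have "x \<in> ?L"
            using \<open>v \<notin> R\<close> False component_in_closed[of v "- R"] by simp
          then show False
            using step.prems by simp
        qed
        then have "(x, y) \<in> adj_in ends UNIV (- ?L)"
          using step.hyps(1) step.prems by (simp add: adj_in_def)
        then show ?thesis
          using step.IH[OF \<open>y \<notin> ?L\<close>] by (rule converse_rtrancl_into_rtrancl)
      qed
    qed simp
  qed
  show ?thesis
  proof (rule connected_on_if_reachable_within)
    show "r \<in> - ?L"
      using \<open>r \<in> R\<close> RL by blast
    fix x assume "x \<in> - ?L"
    then have "(x, r) \<in> (adj_in ends UNIV (- ?L))\<^sup>*"
      by (intro to_r) simp
    then show "(r, x) \<in> (adj_in ends UNIV (- ?L))\<^sup>*"
      by (rule adj_in_rtrancl_sym)
  qed
qed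

text \<open>If some vertex \<open>v\<close> is not reachable from \<open>q\<close>, the component \<open>L\<close> of \<open>v\<close> outside the
  reachable set is one side of a connected cut avoiding \<open>q\<close>, and no arc of \<open>C\<close> enters \<open>L\<close>.\<close>
lemma reaches_all_if_meets_cuts:
  assumes conn: "graph_connected ends" and meets: "\<forall>S\<in>cut_sets ends q. C \<inter> S \<noteq> {}"
  shows "reaches_all ends q C"
proof (rule ccontr)
  define R where "R = {v. (q, v) \<in> (arcs ends C)\<^sup>*}"
  assume "\<not> reaches_all ends q C"
  then obtain v where "v \<notin> R"
    by (auto simp: reaches_all_def R_def)
  define L where "L = component_in ends (- R) v"
  have "q \<in> R"
    by (simp add: R_def)
  have "L \<subseteq> - R"
    using component_in_subset[of v "- R" ends] \<open>v \<notin> R\<close> by (simp add: L_def)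
  have "connected_cut_side ends L"
    unfolding connected_cut_side_def
  proof (intro conjI)
    show "L \<noteq> {}" "L \<noteq> UNIV"
      using \<open>q \<in> R\<close> \<open>L \<subseteq> - R\<close> by (auto simp: L_def component_in_def)
    show "connected_on ends UNIV L"
      unfolding L_def using \<open>v \<notin> R\<close> by (simp add: connected_on_component_in)
    show "connected_on ends UNIV (- L)"
      unfolding L_def R_def using conn connected_on_reachable \<open>v \<notin> R\<close>[unfolded R_def]
      by (rule connected_on_Compl_component_in)
  qed
  moreover have "q \<in> - L"
    using \<open>q \<in> R\<close> \<open>L \<subseteq> - R\<close> by blast
  ultimately have "oedges_between ends L (- L) \<in> cut_sets ends q"
    by (auto simp: cut_sets_def)
  then have "C \<inter> oedges_between ends L (- L) \<noteq> {}"
    using meets by blast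
  then obtain oe where oe: "oe \<in> C" "ohead ends oe \<in> L" "otail ends oe \<notin> L"
    by (auto simp: oedges_between_def)
  show False
  proof (cases "otail ends oe \<in> R")
    case True
    then have "ohead ends oe \<in> R"
      using arcsI[OF oe(1)] by (auto simp: R_def intro: rtrancl_into_rtrancl)
    then show False
      using oe(2) \<open>L \<subseteq> - R\<close> by blast
  next
    case False
    have "(ohead ends oe, otail ends oe) \<in> adj_in ends UNIV UNIV"
      using ends_fst_cases[of ends oe] by (auto simp: adj_in_def)
    then have "otail ends oe \<in> L"
      using component_in_closed[of v "- R" "ohead ends oe" ends "otail ends oe"] oe(2) \<open>v \<notin> R\<close> False
      by (simp add: L_def)
    then show False
      using oe(3) by blast
  qed
qed

lemma stanley_reisner_cut_sets:
  assumes "graph_connected ends"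
  shows "stanley_reisner (cut_sets ends q) = {F. reaches_all ends q (- F)}"
proof -
  have "reaches_all ends q (- F) \<longleftrightarrow> (\<forall>S\<in>cut_sets ends q. - F \<inter> S \<noteq> {})" for F
  proof
    assume reach: "reaches_all ends q (- F)"
    show "\<forall>S\<in>cut_sets ends q. - F \<inter> S \<noteq> {}"
    proof
      fix S assume "S \<in> cut_sets ends q"
      then obtain A v where "S = oedges_between ends A (- A)" "v \<in> A" "q \<notin> A"
        by (auto simp: cut_sets_def connected_cut_side_def)
      then show "- F \<inter> S \<noteq> {}"
        using reaches_all_meets_cut[OF reach] by simp
    qed
  qed (rule reaches_all_if_meets_cuts[OF assms])
  then show ?thesis
    by (auto simp: stanley_reisner_def)
qed

lemma stanley_reisner_cut_edge_sets:
  assumes "graph_connected ends"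
  shows "stanley_reisner (image fst ` cut_sets ends q) = {F. connected_on ends (- F) UNIV}"
proof -
  have "F \<in> stanley_reisner (image fst ` cut_sets ends q) \<longleftrightarrow> fst -` F \<in> stanley_reisner (cut_sets ends q)" for F
    by (auto simp: stanley_reisner_def image_subset_iff_subset_vimage)
  then show ?thesis
    using stanley_reisner_cut_sets[OF assms] connected_on_iff_reaches_all[of ends "- _" q]
    by (auto simp: vimage_Compl)
qed

section \<open>The cut ideals\<close>

lemma prod_var_eq_monomial:
  assumes "finite S"
  shows "(\<Prod>x\<in>S. var (f x) :: ('x, 'k::comm_semiring_1) mpoly) = monomial (\<Sum>x\<in>S. Poly_Mapping.single (f x) 1)"
  using assms by (induction rule: finite_induct) (simp_all add: var_def mult_single)

lemma inj_on_fst_oedges_between_Compl: "inj_on fst (oedges_between ends A (- A))"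
proof (rule inj_onI)
  fix oe oe' assume "oe \<in> oedges_between ends A (- A)" "oe' \<in> oedges_between ends A (- A)" "fst oe = fst oe'"
  then show "oe = oe'"
    using same_edge_cases[of oe oe' ends] by (auto simp: oedges_between_def)
qed

lemma cut_gens_oriented_eq_sqfree_gens:
  fixes ends :: "'e::finite \<Rightarrow> 'v \<times> 'v"
  shows "(cut_gens_oriented ends q :: ('e \<times> bool, 'k::field) mpoly set) = sqfree_gens (cut_sets ends q)"
proof -
  have "(\<Prod>oe\<in>S. var oe :: ('e \<times> bool, 'k) mpoly) = monomial (sqfree_monomial S)" for S
    using prod_var_eq_monomial[of S "\<lambda>oe. oe"] by (simp add: sqfree_monomial_def)
  then show ?thesis
    unfolding cut_gens_oriented_def sqfree_gens_def cut_sets_def by auto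
qed

lemma cut_gens_eq_sqfree_gens:
  fixes ends :: "'e::finite \<Rightarrow> 'v \<times> 'v"
  shows "(cut_gens ends q :: ('e, 'k::field) mpoly set) = sqfree_gens (image fst ` cut_sets ends q)"
proof -
  have "(\<Prod>oe\<in>oedges_between ends A (- A). var (fst oe) :: ('e, 'k) mpoly)
      = monomial (sqfree_monomial (fst ` oedges_between ends A (- A)))" for A
    using prod_var_eq_monomial[of "oedges_between ends A (- A)" fst]
    by (simp add: sqfree_monomial_def sum.reindex[OF inj_on_fst_oedges_between_Compl])
  then show ?thesis
    unfolding cut_gens_def sqfree_gens_def cut_sets_def by auto
qed

lemma card_complements_le:
  fixes P :: "'a::finite set \<Rightarrow> bool"
  assumes "\<And>C. P C \<Longrightarrow> k \<le> card C" "k \<le> card (UNIV :: 'a set)"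
  shows "\<forall>F\<in>{F. P (- F)}. card F \<le> card (UNIV :: 'a set) - k"
    and "{F\<in>{F. P (- F)}. card F = card (UNIV :: 'a set) - k} = uminus ` {C. P C \<and> card C = k}"
proof -
  have card_le: "card F \<le> card (UNIV :: 'a set)" for F :: "'a set"
    by (rule card_mono) simp_all
  show "\<forall>F\<in>{F. P (- F)}. card F \<le> card (UNIV :: 'a set) - k"
  proof
    fix F assume "F \<in> {F. P (- F)}"
    then have "k \<le> card (- F)"
      using assms(1) by simp
    then show "card F \<le> card (UNIV :: 'a set) - k"
      using card_Compl_finite[of F] card_le[of F] by linarith
  qed
  show "{F\<in>{F. P (- F)}. card F = card (UNIV :: 'a set) - k} = uminus ` {C. P C \<and> card C = k}"
  proof (rule set_eqI)
    fix F :: "'a set"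
    have "card F = card (UNIV :: 'a set) - k \<longleftrightarrow> card (- F) = k"
      using assms(2) card_Compl_finite[of F] card_le[of F] by linarith
    moreover have "F \<in> uminus ` {C. P C \<and> card C = k} \<longleftrightarrow> - F \<in> {C. P C \<and> card C = k}"
      using image_eqI[of F uminus "- F"] by auto
    ultimately show "F \<in> {F\<in>{F. P (- F)}. card F = card (UNIV :: 'a set) - k} \<longleftrightarrow> F \<in> uminus ` {C. P C \<and> card C = k}"
      by simp
  qed
qed

lemma card_UNIV_oriented_edges: "card (UNIV :: ('e::finite \<times> bool) set) = 2 * card (UNIV :: 'e set)"
  by (simp flip: UNIV_Times_UNIV add: card_cartesian_product)

lemma quot_dim_multiplicity_cut_gens_oriented:
  fixes ends :: "'e::finite \<Rightarrow> 'v::finite \<times> 'v"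
  assumes "graph_connected ends"
  shows "quot_dim TYPE('k::field) (cut_gens_oriented ends q :: ('e \<times> bool, 'k) mpoly set)
      = 2 * card (UNIV :: 'e set) - (card (UNIV :: 'v set) - 1)"
    and "multiplicity TYPE('k) (cut_gens_oriented ends q :: ('e \<times> bool, 'k) mpoly set)
      = card (spanning_trees ends)"
proof -
  define r where "r = 2 * card (UNIV :: 'e set) - (card (UNIV :: 'v set) - 1)"
  have faces: "stanley_reisner (cut_sets ends q) = {F. reaches_all ends q (- F)}"
    by (rule stanley_reisner_cut_sets[OF assms])
  have all: "reaches_all ends q UNIV"
    using assms connected_on_iff_reaches_all[of ends UNIV q] by (simp add: graph_connected_def)
  have "\<And>C. reaches_all ends q C \<Longrightarrow> card (UNIV :: 'v set) - 1 \<le> card C"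
    by (rule card_ge_if_reaches_all)
  note complements = card_complements_le[OF this this[OF all]]
  have bound: "\<forall>F\<in>stanley_reisner (cut_sets ends q). card F \<le> r"
    using complements(1) by (simp add: faces r_def card_UNIV_oriented_edges)
  have top: "{F \<in> stanley_reisner (cut_sets ends q). card F = r} = uminus ` arborescences ends q"
    using complements(2) by (simp add: faces r_def arborescences_def card_UNIV_oriented_edges)
  obtain C where "C \<in> arborescences ends q"
    using reaches_all_obtain_arborescence[OF all] by blast
  then have "\<exists>F\<in>stanley_reisner (cut_sets ends q). card F = r"
    using top by blast
  note sqfree = quot_dim_multiplicity_sqfree_gens[OF bound this, where 'k = 'k]
  have "inj_on uminus (arborescences ends q)"
    by (rule inj_onI) simp
  then show "quot_dim TYPE('k) (cut_gens_oriented ends q :: ('e \<times> bool, 'k) mpoly set) = r"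
    and "multiplicity TYPE('k) (cut_gens_oriented ends q :: ('e \<times> bool, 'k) mpoly set)
      = card (spanning_trees ends)"
    using sqfree by (simp_all add: cut_gens_oriented_eq_sqfree_gens top card_image card_arborescences)
qed

lemma quot_dim_multiplicity_cut_gens:
  fixes ends :: "'e::finite \<Rightarrow> 'v::finite \<times> 'v"
  assumes "graph_connected ends"
  shows "quot_dim TYPE('k::field) (cut_gens ends q :: ('e, 'k) mpoly set)
      = card (UNIV :: 'e set) - (card (UNIV :: 'v set) - 1)"
    and "multiplicity TYPE('k) (cut_gens ends q :: ('e, 'k) mpoly set) = card (spanning_trees ends)"
proof -
  define r where "r = card (UNIV :: 'e set) - (card (UNIV :: 'v set) - 1)"
  have faces: "stanley_reisner (image fst ` cut_sets ends q) = {F. connected_on ends (- F) UNIV}"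
    by (rule stanley_reisner_cut_edge_sets[OF assms])
  have "\<And>T. connected_on ends T UNIV \<Longrightarrow> card (UNIV :: 'v set) - 1 \<le> card T"
    by (rule card_ge_if_connected_on)
  note complements = card_complements_le[OF this this[OF assms[unfolded graph_connected_def]]]
  have bound: "\<forall>F\<in>stanley_reisner (image fst ` cut_sets ends q). card F \<le> r"
    using complements(1) by (simp add: faces r_def)
  have top: "{F \<in> stanley_reisner (image fst ` cut_sets ends q). card F = r} = uminus ` spanning_trees ends"
    using complements(2) by (simp add: faces r_def spanning_trees_def conj_commute)
  have "reaches_all ends q UNIV"
    using assms connected_on_iff_reaches_all[of ends UNIV q] by (simp add: graph_connected_def)
  then obtain C where "C \<in> arborescences ends q"
    using reaches_all_obtain_arborescence by blast
  then have "\<exists>F\<in>stanley_reisner (image fst ` cut_sets ends q). card F = r"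
    using fst_arborescence_spanning_tree top by blast
  note sqfree = quot_dim_multiplicity_sqfree_gens[OF bound this, where 'k = 'k]
  have "inj_on uminus (spanning_trees ends)"
    by (rule inj_onI) simp
  then show "quot_dim TYPE('k) (cut_gens ends q :: ('e, 'k) mpoly set) = r"
    and "multiplicity TYPE('k) (cut_gens ends q :: ('e, 'k) mpoly set) = card (spanning_trees ends)"
    using sqfree by (simp_all add: cut_gens_eq_sqfree_gens top card_image)
qed

theorem mainTheorem11:
  fixes ends :: "'e::finite \<Rightarrow> 'v::finite \<times> 'v"
    and q :: 'v
  assumes "loopless ends"
    and "graph_connected ends"
  shows "int (quot_dim TYPE('k::field) (cut_gens_oriented ends q :: ('e \<times> bool, 'k) mpoly set))
           = 2 * int (card (UNIV :: 'e set)) - int (card (UNIV :: 'v set)) + 1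
       \<and> multiplicity TYPE('k) (cut_gens_oriented ends q :: ('e \<times> bool, 'k) mpoly set)
           = multiplicity TYPE('k) (cut_gens ends q :: ('e, 'k) mpoly set)
       \<and> multiplicity TYPE('k) (cut_gens ends q :: ('e, 'k) mpoly set)
           = real (card (spanning_trees ends))"
proof -
  have "card (UNIV :: 'v set) - 1 \<le> card (UNIV :: 'e set)"
    using assms(2) unfolding graph_connected_def by (rule card_ge_if_connected_on)
  moreover have "0 < card (UNIV :: 'v set)"
    by (simp add: finite_UNIV_card_ge_0)
  ultimately show ?thesis
    using quot_dim_multiplicity_cut_gens_oriented[OF assms(2), where 'k = 'k]
      quot_dim_multiplicity_cut_gens(2)[OF assms(2), where 'k = 'k]
    by (simp add: of_nat_diff)
qed

end
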